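(* Let $Q_{\mathcal D}(w,x,y,z)=2(w^2+x^2+y^2+z^2)-(w+x+y+z)^2$ and $Q_{\mathcal L}(W,X,Y,Z)=-W^2+X^2+Y^2+Z^2$, and let $$\mathbf J_0=\frac12\begin{pmatrix}1&1&1&1\\1&1&-1&-1\\1&-1&1&-1\\1&-1&-1&1\end{pmatrix}.$$ For each $r\in\mathbb R$, the map $(W,X,Y,Z)^T=\mathbf J_0(w,x,y,z)^T$ is a bijection between real solutions of $Q_{\mathcal D}(w,x,y,z)=4r$ and real solutions of $Q_{\mathcal L}(W,X,Y,Z)=2r$, and it preserves the Euclidean height $H$. When $r=m\in\mathbb Z$, this map restricts to a bijection between integer solutions of $Q_{\mathcal D}(w,x,y,z)=4m$ and integer solutions of $Q_{\mathcal L}(W,X,Y,Z)=2m$. In particular, for all integers $m$ and all $T>0$, $N_{\mathcal D}(4m,T)=N_{\mathcal L}(2m,T)$.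
   Context: The Euclidean height of a real quadruple $\mathbf v=(w,x,y,z)$ is $H(\mathbf v)=(w^2+x^2+y^2+z^2)^{1/2}$. $N_{\mathcal D}(k,T)$ denotes the number of integer quadruples $\mathbf v$ with $Q_{\mathcal D}(\mathbf v)=k$ and $H(\mathbf v)\le T$; $N_{\mathcal L}(k,T)$ denotes the number of integer quadruples $\mathbf v$ with $Q_{\mathcal L}(\mathbf v)=k$ and $H(\mathbf v)\le T$. *)

theory Defs
  imports Complex_Main
begin

definition QD :: "'a::comm_ring_1 \<times> 'a \<times> 'a \<times> 'a \<Rightarrow> 'a" where
  "QD = (\<lambda>(w,x,y,z). 2 * (w^2 + x^2 + y^2 + z^2) - (w + x + y + z)^2)"

definition QL :: "'a::comm_ring_1 \<times> 'a \<times> 'a \<times> 'a \<Rightarrow> 'a" where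
  "QL = (\<lambda>(a,b,c,d). - (a^2) + b^2 + c^2 + d^2)"

definition J0 :: "real \<times> real \<times> real \<times> real \<Rightarrow> real \<times> real \<times> real \<times> real" where
  "J0 = (\<lambda>(w,x,y,z). ((w + x + y + z) / 2, (w + x - y - z) / 2,
                      (w - x + y - z) / 2, (w - x - y + z) / 2))"

definition H :: "real \<times> real \<times> real \<times> real \<Rightarrow> real" where
  "H = (\<lambda>(w,x,y,z). sqrt (w^2 + x^2 + y^2 + z^2))"

definition int_quads :: "(real \<times> real \<times> real \<times> real) set" where
  "int_quads = {(w,x,y,z). w \<in> \<int> \<and> x \<in> \<int> \<and> y \<in> \<int> \<and> z \<in> \<int>}"

definition real_quad :: "int \<times> int \<times> int \<times> int \<Rightarrow> real \<times> real \<times> real \<times> real" where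
  "real_quad = (\<lambda>(w,x,y,z). (of_int w, of_int x, of_int y, of_int z))"

definition N_D :: "int \<Rightarrow> real \<Rightarrow> nat" where
  "N_D k T = card {v :: int \<times> int \<times> int \<times> int. QD v = k \<and> H (real_quad v) \<le> T}"

definition N_L :: "int \<Rightarrow> real \<Rightarrow> nat" where
  "N_L k T = card {v :: int \<times> int \<times> int \<times> int. QL v = k \<and> H (real_quad v) \<le> T}"

end

theory Submission
  imports Defs
begin

text \<open>\<open>J0\<close> is a symmetric orthogonal matrix, hence an involution preserving \<open>H\<close>, and it
  transforms \<open>QL\<close> into \<open>QD / 2\<close>; so it exchanges the real level sets. For integrality: on
  integer quadruples both \<open>QD\<close> and \<open>QL\<close> are congruent to the coordinate sum modulo 2, and
  \<open>J0\<close> sends an integer quadruple with even coordinate sum to an integer quadruple.\<close>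

lemma J0_J0 [simp]: "J0 (J0 v) = v"
  by (cases v) (auto simp: J0_def field_simps)

lemma QL_J0: "QL (J0 v) = QD v / 2"
  by (cases v) (auto simp: J0_def QL_def QD_def field_simps power2_eq_square)

lemma H_J0: "H (J0 v) = H v"
  by (cases v) (auto simp: J0_def H_def field_simps power2_eq_square)

lemma bij_betw_J0:
  assumes "\<And>v. J0 v \<in> B \<longleftrightarrow> v \<in> A"
  shows "bij_betw J0 A B"
  by (rule bij_betw_byWitness[where f' = J0]) (auto simp flip: assms)

lemma even_QD_iff: "even (QD (w, x, y, z :: int)) \<longleftrightarrow> even (w + x + y + z)"
  by (simp add: QD_def)

lemma even_QL_iff: "even (QL (w, x, y, z :: int)) \<longleftrightarrow> even (w + x + y + z)"
  by (auto simp: QL_def)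

lemma QD_real_quad: "QD (real_quad u) = of_int (QD u)"
  by (cases u) (simp add: QD_def real_quad_def)

lemma QL_real_quad: "QL (real_quad u) = of_int (QL u)"
  by (cases u) (simp add: QL_def real_quad_def)

lemma inj_real_quad: "inj real_quad"
  by (rule injI) (auto simp: real_quad_def split: prod.splits)

lemma int_quads_eq_range: "int_quads = range real_quad"
proof
  show "int_quads \<subseteq> range real_quad"
  proof
    fix v assume "v \<in> int_quads"
    then obtain w x y z where "v = (of_int w, of_int x, of_int y, of_int z)"
      by (auto simp: int_quads_def elim!: Ints_cases)
    then show "v \<in> range real_quad"
      by (simp add: real_quad_def image_iff)
  qed
  show "range real_quad \<subseteq> int_quads"
    by (auto simp: int_quads_def real_quad_def)
qed

lemma card_int_quads: "card {u. P (real_quad u)} = card {v \<in> int_quads. P v}"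
proof (rule bij_betw_same_card)
  show "bij_betw real_quad {u. P (real_quad u)} {v \<in> int_quads. P v}"
    using inj_real_quad by (auto simp: bij_betw_def int_quads_eq_range inj_on_def)
qed

lemma J0_real_quad_in_int_quads:
  assumes "even (w + x + y + z)"
  shows "J0 (real_quad (w, x, y, z)) \<in> int_quads"
proof -
  from assms obtain k where k: "w + x + y + z = 2 * k" by (rule evenE)
  then have "real_of_int w + of_int x + of_int y + of_int z = 2 * of_int k"
    by (metis of_int_add of_int_mult of_int_numeral)
  then have "J0 (real_quad (w, x, y, z)) = real_quad (k, k - y - z, k - x - z, k - x - y)"
    by (simp add: J0_def real_quad_def field_simps)
  then show ?thesis
    by (simp add: int_quads_eq_range)
qed

lemma J0_in_int_quads:
  assumes "v \<in> int_quads" and "QD v = 2 * of_int k \<or> QL v = 2 * of_int k"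
  shows "J0 v \<in> int_quads"
proof -
  obtain w x y z where v: "v = real_quad (w, x, y, z)"
    using assms(1) by (auto simp: int_quads_eq_range)
  with assms(2) have "QD (w, x, y, z) = 2 * k \<or> QL (w, x, y, z) = 2 * k"
    by (metis QD_real_quad QL_real_quad of_int_eq_iff of_int_mult of_int_numeral)
  then have "even (w + x + y + z)"
    by (metis dvd_triv_left even_QD_iff even_QL_iff)
  then show ?thesis
    unfolding v by (rule J0_real_quad_in_int_quads)
qed

lemma J0_in_int_quads_iff:
  "J0 v \<in> int_quads \<and> QL (J0 v) = 2 * of_int m \<longleftrightarrow> v \<in> int_quads \<and> QD v = 4 * of_int m"
  using J0_in_int_quads[of v "2 * m"] J0_in_int_quads[of "J0 v" m]
  by (auto simp: QL_J0)

lemma N_D_eq_card: "N_D k T = card {v \<in> int_quads. QD v = of_int k \<and> H v \<le> T}"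
  unfolding N_D_def using card_int_quads [of "\<lambda>v. QD v = of_int k \<and> H v \<le> T"]
  by (simp add: QD_real_quad)

lemma N_L_eq_card: "N_L k T = card {v \<in> int_quads. QL v = of_int k \<and> H v \<le> T}"
  unfolding N_L_def using card_int_quads [of "\<lambda>v. QL v = of_int k \<and> H v \<le> T"]
  by (simp add: QL_real_quad)

theorem lemma2p1:
  shows "(\<forall>r::real.
            bij_betw J0 {v. QD v = 4 * r} {v. QL v = 2 * r}
          \<and> (\<forall>v. QD v = 4 * r \<longrightarrow> H (J0 v) = H v))
       \<and> (\<forall>m::int.
            bij_betw J0 {v \<in> int_quads. QD v = 4 * of_int m}
                        {v \<in> int_quads. QL v = 2 * of_int m})
       \<and> (\<forall>(m::int) (T::real). T > 0 \<longrightarrow> N_D (4 * m) T = N_L (2 * m) T)"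
proof (intro conjI allI impI)
  fix r :: real and v
  show "bij_betw J0 {v. QD v = 4 * r} {v. QL v = 2 * r}"
    by (rule bij_betw_J0) (simp add: QL_J0)
  show "H (J0 v) = H v"
    by (rule H_J0)
next
  fix m :: int
  show "bij_betw J0 {v \<in> int_quads. QD v = 4 * of_int m} {v \<in> int_quads. QL v = 2 * of_int m}"
    by (rule bij_betw_J0) (simp add: J0_in_int_quads_iff)
next
  fix m :: int and T :: real
  have "bij_betw J0 {v \<in> int_quads. QD v = of_int (4 * m) \<and> H v \<le> T}
                    {v \<in> int_quads. QL v = of_int (2 * m) \<and> H v \<le> T}"
  proof (rule bij_betw_J0)
    fix v
    show "J0 v \<in> {v \<in> int_quads. QL v = of_int (2 * m) \<and> H v \<le> T} \<longleftrightarrow>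
          v \<in> {v \<in> int_quads. QD v = of_int (4 * m) \<and> H v \<le> T}"
      using J0_in_int_quads_iff [of v m] by (auto simp: H_J0)
  qed
  then show "N_D (4 * m) T = N_L (2 * m) T"
    unfolding N_D_eq_card N_L_eq_card by (rule bij_betw_same_card)
qed

end
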